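(* Let $T$ be a tree with at least two vertices. The following are equivalent. (1) $T$ is always solvable. (2) Either there are disjoint always solvable trees $T_1,T_2$ and vertices $u\in V(T_1)$, $w\in V(T_2)$ with $\mathcal{A}_{T_1}(u)=0$, $\mathcal{A}_{T_2}(w)=1$ such that $T=T_1uwT_2$; or there are pairwise disjoint always solvable trees $T_1,T_2,T_3$ and vertices $x\in V(T_1)$, $y\in V(T_2)$, $z\in V(T_3)$ with $\mathcal{A}_{T_1}(x)=\mathcal{A}_{T_2}(y)=\mathcal{A}_{T_3}(z)=1$ such that $T$ is obtained from the disjoint union $T_1\cup T_2\cup T_3$ by adding the edges $xy$ and $yz$. (3) Either there are disjoint always solvable trees $T_1,T_2$ and vertices $u\in V(T_1)$, $w\in V(T_2)$ with $\mathcal{A}_{T_1}(u)=0$, $\mathcal{A}_{T_2}(w)=1$ such that $T=T_1uwT_2$; or there are pairwise disjoint always solvable trees $T_1,T_2,T_3$ and vertices $a\in V(T_1)$, $b\in V(T_2)$ with $\mathcal{A}_{T_1}(a)=\mathcal{A}_{T_2}(b)=1$, such that, setting $X:=T_1abT_2$, there are vertices $y\in V(T_3)$ and $x\in V(X)$ with $\mathcal{A}_{T_3}(y)=1$, $\mathcal{A}_X(x)=-1$ and $T=T_3yxX$.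
   Context: For a finite simple graph $G$ with vertex set $\{v_1,\dots,v_n\}$, the closed adjacency matrix $N(G)$ is the $n\times n$ matrix over $\mathbb{Z}_2$ whose $(i,j)$ entry is $1$ iff $i=j$ or $v_i$ is adjacent to $v_j$. Vectors in $\mathbb{Z}_2^{V(G)}$ are called patterns/configurations; a pattern $\mathbf{p}$ solves a configuration $\mathbf{c}$ if $N(G)\mathbf{p}=\mathbf{c}$. The nullity is $\nu(G):=\dim\operatorname{Ker}(N(G))$; elements of $\operatorname{Ker}(N(G))$ are null patterns; $G$ is always solvable if $\nu(G)=0$. $\mathbf{1}$ is the all-ones configuration; it is solvable on every graph. A vertex $v$ is half-activated if $\boldsymbol{\ell}(v)=1$ for some null pattern $\boldsymbol{\ell}$; otherwise it is always-activated if $\mathbf{p}(v)=1$ for every $\mathbf{p}$ with $N(G)\mathbf{p}=\mathbf{1}$, and never-activated if $\mathbf{p}(v)=0$ for every such $\mathbf{p}$. The activation number $\mathcal{A}_G(v)$ is $1$, $0$, $-1$ if $v$ is always-activated, never-activated, half-activated respectively. For disjoint graphs $G_1,G_2$ and $u\in V(G_1)$, $w\in V(G_2)$, $G_1uwG_2$ denotes the graph obtained from the disjoint union $G_1\cup G_2$ by adding the edge $uw$. *)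

theory Defs
  imports Complex_Main "HOL-Library.Z2" "HOL-Library.Function_Algebras"
begin

type_synonym 'a graph = "'a set \<times> 'a set set"

definition verts :: "'a graph \<Rightarrow> 'a set" where "verts G = fst G"
definition edges :: "'a graph \<Rightarrow> 'a set set" where "edges G = snd G"

definition simple_graph :: "'a graph \<Rightarrow> bool" where
  "simple_graph G \<longleftrightarrow> finite (verts G) \<and>
     (\<forall>e\<in>edges G. \<exists>u v. u \<noteq> v \<and> u \<in> verts G \<and> v \<in> verts G \<and> e = {u, v})"

definition adj :: "'a graph \<Rightarrow> 'a \<Rightarrow> 'a \<Rightarrow> bool" where
  "adj G u v \<longleftrightarrow> u \<noteq> v \<and> {u, v} \<in> edges G"

definition connected_graph :: "'a graph \<Rightarrow> bool" where
  "connected_graph G \<longleftrightarrow> verts G \<noteq> {} \<and>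
     (\<forall>u\<in>verts G. \<forall>v\<in>verts G. (adj G)\<^sup>*\<^sup>* u v)"

definition is_cycle :: "'a graph \<Rightarrow> 'a list \<Rightarrow> bool" where
  "is_cycle G cs \<longleftrightarrow> length cs \<ge> 3 \<and> distinct cs \<and> set cs \<subseteq> verts G \<and>
     (\<forall>i < length cs - 1. adj G (cs ! i) (cs ! Suc i)) \<and> adj G (last cs) (hd cs)"

definition tree :: "'a graph \<Rightarrow> bool" where
  "tree G \<longleftrightarrow> simple_graph G \<and> connected_graph G \<and> \<not> (\<exists>cs. is_cycle G cs)"

text \<open>Closed neighbourhood and the action of the closed adjacency matrix N(G) over Z_2
  on patterns. Patterns are functions vertex \<Rightarrow> bit vanishing outside V(G).\<close>
definition closed_nbhd :: "'a graph \<Rightarrow> 'a \<Rightarrow> 'a set" where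
  "closed_nbhd G v = {u \<in> verts G. u = v \<or> adj G u v}"

definition Nmul :: "'a graph \<Rightarrow> ('a \<Rightarrow> bit) \<Rightarrow> ('a \<Rightarrow> bit)" where
  "Nmul G p = (\<lambda>v. if v \<in> verts G then (\<Sum>u\<in>closed_nbhd G v. p u) else 0)"

definition patterns :: "'a graph \<Rightarrow> ('a \<Rightarrow> bit) set" where
  "patterns G = {p. \<forall>x. x \<notin> verts G \<longrightarrow> p x = 0}"

definition ones :: "'a graph \<Rightarrow> ('a \<Rightarrow> bit)" where
  "ones G = (\<lambda>v. if v \<in> verts G then 1 else 0)"

definition null_patterns :: "'a graph \<Rightarrow> ('a \<Rightarrow> bit) set" where
  "null_patterns G = {p \<in> patterns G. Nmul G p = (\<lambda>_. 0)}"

definition nullity :: "'a graph \<Rightarrow> nat" where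
  "nullity G = Vector_Spaces.vector_space.dim (\<lambda>(c::bit) (f::'a \<Rightarrow> bit). (\<lambda>x. c * f x)) (null_patterns G)"

definition always_solvable :: "'a graph \<Rightarrow> bool" where
  "always_solvable G \<longleftrightarrow> nullity G = 0"

definition half_activated :: "'a graph \<Rightarrow> 'a \<Rightarrow> bool" where
  "half_activated G v \<longleftrightarrow> (\<exists>l\<in>null_patterns G. l v = 1)"

definition always_activated :: "'a graph \<Rightarrow> 'a \<Rightarrow> bool" where
  "always_activated G v \<longleftrightarrow> \<not> half_activated G v \<and>
     (\<forall>p\<in>patterns G. Nmul G p = ones G \<longrightarrow> p v = 1)"

definition never_activated :: "'a graph \<Rightarrow> 'a \<Rightarrow> bool" where
  "never_activated G v \<longleftrightarrow> \<not> half_activated G v \<and>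
     (\<forall>p\<in>patterns G. Nmul G p = ones G \<longrightarrow> p v = 0)"

text \<open>Activation number (meaningful for v \<in> V(G); every such vertex falls in exactly
  one of the three classes since the all-ones configuration is solvable).\<close>
definition activation :: "'a graph \<Rightarrow> 'a \<Rightarrow> int" where
  "activation G v = (if half_activated G v then -1
                     else if always_activated G v then 1
                     else if never_activated G v then 0 else undefined)"

definition edge_join :: "'a graph \<Rightarrow> 'a \<Rightarrow> 'a \<Rightarrow> 'a graph \<Rightarrow> 'a graph" where
  "edge_join G1 u w G2 = (verts G1 \<union> verts G2, edges G1 \<union> edges G2 \<union> {{u, w}})"

end

theory Submission
  imports Defs "HOL-Library.Transitive_Closure_Table" "HOL-Library.Disjoint_Sets"
begin

(* Over Z_2 the closed adjacency matrix N is symmetric and p . N p = sum p, because the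
   off-diagonal terms cancel in pairs. Hence if N q = e_u and N s = 1 then q u = s u: for an
   always solvable graph the activation number of u is the diagonal entry of N^-1 at u.

   For G = G1 u w G2 the equations N p = c on G1 and on G2 are coupled only through p u and p w.
   If G1 is always solvable and A(u) = 0, then G is always solvable iff G2 is. If G1 and G2 are
   always solvable with A(u) = A(w) = 1, then q_u + q_w (q_u, q_w the solutions for e_u, e_w) is
   the only nonzero null pattern of G, so u and w are half-activated. Attaching to a
   half-activated vertex x of such a join X an always solvable tree at a vertex of activation 1
   gives an always solvable graph: a null pattern p would solve N_X p = p(x) e_x on X, and
   pairing with the null pattern of X forces p(x) = 0. This yields (2) => (3) => (1).

   Conversely let T be an always solvable tree, s the solution of N s = 1, y a vertex with
   s y = 1 and uy an edge. Cutting uy gives T = B u y A, where pairing N_B s = 1 + e_u with the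
   null patterns of B shows that B is always solvable and s u = 0. If A is always solvable,
   this is the first decomposition. Otherwise y is half-activated in A and A_B(u) = 1; cutting A
   at an edge zy yields either the first decomposition again or a star C z y (B u y A') whose
   three branches are always solvable with activation 1 at z, u and y. *)

(* HOL-Library.Z2 rewrites + and * on bits to xor and and, which blocks ring reasoning. *)
declare add_bit_eq_xor [simp del] mult_bit_eq_and [simp del]

lemma bit_add_self [simp]: "(x::bit) + x = 0"
  by (cases x) simp_all

lemma bit_mult_self [simp]: "(x::bit) * x = x"
  by (cases x) simp_all

lemma bit_add_eq_0_iff: "(x::bit) + y = 0 \<longleftrightarrow> x = y"
  by (cases x; cases y) simp_all

section \<open>Patterns and the closed adjacency matrix\<close>

interpretation pattern_space: vector_space "\<lambda>(c::bit) (f::'a \<Rightarrow> bit). (\<lambda>x. c * f x)"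
  by unfold_locales (simp_all add: fun_eq_iff algebra_simps)

lemma finite_patterns:
  assumes "finite (verts G)"
  shows "finite (patterns G)"
proof -
  have "(UNIV :: bit set) = {0, 1}"
    using bit_not_one_iff by blast
  then have "finite (UNIV :: bit set)"
    by (metis finite.emptyI finite_insert)
  then have "finite {p. \<forall>x. (x \<in> verts G \<longrightarrow> p x \<in> (UNIV :: bit set)) \<and> (x \<notin> verts G \<longrightarrow> p x = 0)}"
    by (intro finite_set_of_finite_funs[OF assms])
  then show ?thesis
    by (simp add: patterns_def)
qed

lemma pattern_outside: "p \<in> patterns G \<Longrightarrow> x \<notin> verts G \<Longrightarrow> p x = 0"
  by (simp add: patterns_def)

lemma pattern_eq_0I: "p \<in> patterns G \<Longrightarrow> (\<And>x. x \<in> verts G \<Longrightarrow> p x = 0) \<Longrightarrow> p = 0"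
  by (auto simp: patterns_def fun_eq_iff)

lemma ones_in_patterns: "ones G \<in> patterns G"
  by (simp add: ones_def patterns_def)

definition restrict_pattern :: "'a graph \<Rightarrow> ('a \<Rightarrow> bit) \<Rightarrow> 'a \<Rightarrow> bit" where
  "restrict_pattern G p x = (if x \<in> verts G then p x else 0)"

lemma restrict_pattern_in_patterns: "restrict_pattern G p \<in> patterns G"
  by (simp add: restrict_pattern_def patterns_def)

lemma null_patterns_eq: "null_patterns G = {p \<in> patterns G. Nmul G p = 0}"
  by (simp add: null_patterns_def zero_fun_def)

lemma adj_sym: "adj G u v \<longleftrightarrow> adj G v u"
  by (auto simp: adj_def insert_commute)

lemma adj_imp_verts: "simple_graph G \<Longrightarrow> adj G a b \<Longrightarrow> a \<in> verts G \<and> b \<in> verts G"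
  unfolding simple_graph_def adj_def by (metis doubleton_eq_iff)

lemma Nmul_outside: "v \<notin> verts G \<Longrightarrow> Nmul G p v = 0"
  by (simp add: Nmul_def)

lemma Nmul_cong: "(\<And>x. x \<in> verts G \<Longrightarrow> p x = q x) \<Longrightarrow> Nmul G p = Nmul G q"
  unfolding Nmul_def closed_nbhd_def by (intro ext) (auto intro!: sum.cong)

lemma Nmul_restrict_pattern [simp]: "Nmul G (restrict_pattern G p) = Nmul G p"
  by (rule Nmul_cong) (simp add: restrict_pattern_def)

lemma Nmul_add: "Nmul G (p + q) = Nmul G p + Nmul G q"
  by (simp add: Nmul_def sum.distrib fun_eq_iff)

lemma Nmul_scale: "Nmul G (\<lambda>x. c * p x) v = c * Nmul G p v"
  by (simp add: Nmul_def sum_distrib_left)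

lemma Nmul_eq_0_if_vanishing: "(\<And>x. x \<in> verts G \<Longrightarrow> p x = 0) \<Longrightarrow> Nmul G p = 0"
  unfolding Nmul_def closed_nbhd_def by (intro ext) simp

lemma Nmul_disjoint_pattern: "p \<in> patterns G \<Longrightarrow> verts G \<inter> verts H = {} \<Longrightarrow> Nmul H p = 0"
  by (rule Nmul_eq_0_if_vanishing) (auto simp: patterns_def)

lemma Nmul_eq_sum:
  assumes "finite (verts G)" "v \<in> verts G"
  shows "Nmul G p v = p v + (\<Sum>u\<in>verts G. if adj G u v then p u else 0)"
proof -
  have "closed_nbhd G v = insert v {u \<in> verts G. adj G u v}" "v \<notin> {u \<in> verts G. adj G u v}"
    using assms(2) by (auto simp: closed_nbhd_def adj_def)
  then show ?thesis
    using assms by (simp add: Nmul_def sum.inter_filter)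
qed

lemma sum_mult_Nmul:
  assumes "finite (verts G)"
  shows "(\<Sum>v\<in>verts G. p v * Nmul G q v)
    = (\<Sum>v\<in>verts G. p v * q v) + (\<Sum>v\<in>verts G. \<Sum>u\<in>verts G. if adj G u v then p v * q u else 0)"
  using assms by (simp add: Nmul_eq_sum distrib_left sum.distrib sum_distrib_left if_distrib cong: if_cong)

lemma Nmul_symmetric:
  assumes "finite (verts G)"
  shows "(\<Sum>v\<in>verts G. p v * Nmul G q v) = (\<Sum>v\<in>verts G. Nmul G p v * q v)"
proof -
  have "(\<Sum>v\<in>verts G. \<Sum>u\<in>verts G. if adj G u v then p v * q u else 0)
      = (\<Sum>v\<in>verts G. \<Sum>u\<in>verts G. if adj G u v then q v * p u else 0)"
    by (subst sum.swap) (intro sum.cong refl, simp add: adj_sym mult.commute)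
  then have "(\<Sum>v\<in>verts G. p v * Nmul G q v) = (\<Sum>v\<in>verts G. q v * Nmul G p v)"
    using assms by (simp add: sum_mult_Nmul mult.commute)
  then show ?thesis
    by (simp add: mult.commute)
qed

lemma sum_mult_Nmul_self:
  assumes "finite (verts G)"
  shows "(\<Sum>v\<in>verts G. p v * Nmul G p v) = (\<Sum>v\<in>verts G. p v)"
proof -
  let ?X = "{x \<in> verts G \<times> verts G. adj G (snd x) (fst x)}"
  have "(\<Sum>v\<in>verts G. \<Sum>u\<in>verts G. if adj G u v then p v * p u else 0)
      = (\<Sum>x\<in>?X. p (fst x) * p (snd x))"
    using assms by (simp add: sum.cartesian_product sum.inter_filter case_prod_unfold)
  also have "\<dots> = 0"
    by (rule sum_involution_eq_0[where h = prod.swap]) (auto simp: adj_def insert_commute mult.commute)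
  finally show ?thesis
    using assms by (simp add: sum_mult_Nmul)
qed

lemma unit_solution_eq_ones_solution:
  assumes "finite (verts G)" "u \<in> verts G" "Nmul G s = ones G"
    and "\<And>v. v \<in> verts G \<Longrightarrow> Nmul G q v = (if v = u then 1 else 0)"
  shows "q u = s u"
proof -
  have "q u = (\<Sum>v\<in>verts G. if v = u then q v else 0)"
    using assms(1,2) by simp
  also have "\<dots> = (\<Sum>v\<in>verts G. q v * Nmul G q v)"
    using assms(4) by (intro sum.cong) auto
  also have "\<dots> = (\<Sum>v\<in>verts G. q v * Nmul G s v)"
    using assms(1,3) by (simp add: sum_mult_Nmul_self ones_def)
  also have "\<dots> = (\<Sum>v\<in>verts G. Nmul G q v * s v)"
    using assms(1) by (rule Nmul_symmetric)
  also have "\<dots> = (\<Sum>v\<in>verts G. if v = u then s v else 0)"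
    using assms(4) by (intro sum.cong) auto
  also have "\<dots> = s u"
    using assms(1,2) by simp
  finally show ?thesis .
qed

lemma no_unit_solution_at_half_activated:
  assumes "finite (verts G)" "half_activated G x"
    and "\<And>v. v \<in> verts G \<Longrightarrow> Nmul G l v = (if v = x then 1 else 0)"
  shows False
proof -
  obtain m where m: "m \<in> null_patterns G" "m x = 1"
    using assms(2) by (auto simp: half_activated_def)
  then have "x \<in> verts G"
    using pattern_outside[of m G x] by (auto simp: null_patterns_def)
  have "(\<Sum>v\<in>verts G. m v * Nmul G l v) = (\<Sum>v\<in>verts G. if v = x then m v else 0)"
    using assms(3) by (intro sum.cong) simp_all
  also have "\<dots> = 1"
    using assms(1) \<open>x \<in> verts G\<close> m(2) by simp
  finally have "(\<Sum>v\<in>verts G. m v * Nmul G l v) = 1" .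
  moreover have "(\<Sum>v\<in>verts G. m v * Nmul G l v) = 0"
    using Nmul_symmetric[OF assms(1), of m l] m(1) by (simp add: null_patterns_eq)
  ultimately show False
    by simp
qed

lemma half_activated_has_neighbour:
  assumes "half_activated G y"
  obtains z where "adj G z y"
proof -
  obtain m where m: "m \<in> null_patterns G" "m y = 1"
    using assms by (auto simp: half_activated_def)
  then have "y \<in> verts G"
    using pattern_outside[of m G y] by (auto simp: null_patterns_def)
  have "\<exists>z. adj G z y"
  proof (rule ccontr)
    assume "\<nexists>z. adj G z y"
    then have "closed_nbhd G y = {y}"
      using \<open>y \<in> verts G\<close> by (auto simp: closed_nbhd_def)
    then have "Nmul G m y = 1"
      using \<open>y \<in> verts G\<close> m(2) by (simp add: Nmul_def)
    then show False
      using m(1) by (simp add: null_patterns_eq)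
  qed
  then show ?thesis
    using that by blast
qed

lemma ones_solution_nonzero:
  assumes "verts G \<noteq> {}" "Nmul G s = ones G"
  obtains y where "y \<in> verts G" "s y = 1"
proof -
  have "\<exists>y\<in>verts G. s y = 1"
  proof (rule ccontr)
    assume "\<not> (\<exists>y\<in>verts G. s y = 1)"
    then have "Nmul G s = 0"
      by (intro Nmul_eq_0_if_vanishing) auto
    moreover obtain v where "v \<in> verts G"
      using assms(1) by blast
    ultimately show False
      using fun_cong[OF assms(2), of v] by (simp add: ones_def)
  qed
  then show ?thesis
    using that by blast
qed

section \<open>Always solvable graphs and activation numbers\<close>

lemma always_solvable_iff:
  assumes "finite (verts G)"
  shows "always_solvable G \<longleftrightarrow> null_patterns G \<subseteq> {0}"
proof -
  obtain B where B: "B \<subseteq> null_patterns G" "pattern_space.independent B"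
      "null_patterns G \<subseteq> pattern_space.span B" "card B = nullity G"
    unfolding nullity_def by (rule pattern_space.basis_exists)
  have "finite B"
    using B(1) finite_patterns[OF assms] by (auto simp: null_patterns_def intro: finite_subset)
  show ?thesis
  proof
    assume "always_solvable G"
    then have "B = {}"
      using B(4) \<open>finite B\<close> by (simp add: always_solvable_def)
    then show "null_patterns G \<subseteq> {0}"
      using B(3) by simp
  next
    assume "null_patterns G \<subseteq> {0}"
    then have "B = {}"
      using B(1,2) pattern_space.dependent_zero by blast
    then show "always_solvable G"
      using B(4) by (simp add: always_solvable_def)
  qed
qed

lemma always_solvableI:
  "finite (verts G) \<Longrightarrow> (\<And>l. l \<in> null_patterns G \<Longrightarrow> l = 0) \<Longrightarrow> always_solvable G"
  by (auto simp: always_solvable_iff)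

lemma always_solvableD:
  "finite (verts G) \<Longrightarrow> always_solvable G \<Longrightarrow> l \<in> null_patterns G \<Longrightarrow> l = 0"
  by (auto simp: always_solvable_iff)

lemma always_solvable_not_half_activated:
  "finite (verts G) \<Longrightarrow> always_solvable G \<Longrightarrow> \<not> half_activated G v"
  by (auto simp: half_activated_def always_solvable_iff)

lemma always_solvable_eq_on:
  assumes "finite (verts G)" "always_solvable G"
    and "\<And>v. v \<in> verts G \<Longrightarrow> Nmul G p v = Nmul G q v" and "x \<in> verts G"
  shows "p x = q x"
proof -
  let ?d = "restrict_pattern G p + restrict_pattern G q"
  have "Nmul G ?d v = 0" for v
    using assms(3)[of v] by (cases "v \<in> verts G") (simp_all add: Nmul_add Nmul_outside)
  then have "?d \<in> null_patterns G"
    using restrict_pattern_in_patterns[of G] by (simp add: null_patterns_eq patterns_def fun_eq_iff)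
  then have "?d = 0"
    by (rule always_solvableD[OF assms(1,2)])
  then have "?d x = 0"
    by simp
  then show ?thesis
    using assms(4) by (simp add: restrict_pattern_def bit_add_eq_0_iff)
qed

lemma always_solvable_kernel_eq_0:
  assumes "finite (verts G)" "always_solvable G"
    and "\<And>v. v \<in> verts G \<Longrightarrow> Nmul G p v = 0" and "x \<in> verts G"
  shows "p x = 0"
proof -
  have "Nmul G 0 v = 0" for v
    by (simp add: Nmul_def)
  then show ?thesis
    using always_solvable_eq_on[OF assms(1,2), of p 0] assms(3,4) by simp
qed

lemma always_solvable_has_solution:
  assumes "finite (verts G)" "always_solvable G" "c \<in> patterns G"
  obtains p where "p \<in> patterns G" "Nmul G p = c"
proof -
  have "Nmul G ` patterns G = patterns G"
  proof (rule endo_inj_surj)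
    show "finite (patterns G)"
      using assms(1) by (rule finite_patterns)
    show "Nmul G ` patterns G \<subseteq> patterns G"
      by (auto simp: patterns_def Nmul_def)
    show "inj_on (Nmul G) (patterns G)"
    proof (rule inj_onI)
      fix p q
      assume pq: "p \<in> patterns G" "q \<in> patterns G" "Nmul G p = Nmul G q"
      show "p = q"
      proof
        fix x
        show "p x = q x"
          using always_solvable_eq_on[OF assms(1,2), of p q x] pq
            pattern_outside[OF pq(1), of x] pattern_outside[OF pq(2), of x]
          by (cases "x \<in> verts G") simp_all
      qed
    qed
  qed
  then show ?thesis
    using assms(3) that by (metis imageE)
qed

lemma not_half_activated_cases:
  assumes "\<not> half_activated G v"
  shows "always_activated G v \<or> never_activated G v"
proof (rule ccontr)
  assume "\<not> (always_activated G v \<or> never_activated G v)"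
  then obtain p q where "p \<in> patterns G" "Nmul G p = ones G" "p v \<noteq> 1"
      and "q \<in> patterns G" "Nmul G q = ones G" "q v \<noteq> 0"
    using assms by (auto simp: always_activated_def never_activated_def)
  then have "p + q \<in> null_patterns G" "(p + q) v = 1"
    by (auto simp: null_patterns_eq patterns_def Nmul_add fun_eq_iff)
  then show False
    using assms by (auto simp: half_activated_def)
qed

lemma activation_eq_minus_1_iff: "activation G v = -1 \<longleftrightarrow> half_activated G v"
  using not_half_activated_cases[of G v] by (auto simp: activation_def)

lemma activation_always_solvable:
  assumes "finite (verts G)" "always_solvable G" "Nmul G s = ones G" "v \<in> verts G"
  shows "activation G v = (if s v = 1 then 1 else 0)"
proof -
  have not_half: "\<not> half_activated G v"
    using assms(1,2) by (rule always_solvable_not_half_activated)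
  have unique: "p v = s v" if "Nmul G p = ones G" for p
    using always_solvable_eq_on[OF assms(1,2) _ assms(4), of p s] that assms(3) by simp
  show ?thesis
  proof (cases "s v = 1")
    case True
    then have "always_activated G v"
      using not_half unique by (simp add: always_activated_def)
    then show ?thesis
      using not_half True by (simp add: activation_def)
  next
    case False
    then have "never_activated G v"
      using not_half unique by (simp add: never_activated_def)
    moreover have "\<not> always_activated G v"
    proof
      assume "always_activated G v"
      then have "restrict_pattern G s v = 1"
        using assms(3) restrict_pattern_in_patterns[of G s] by (simp add: always_activated_def)
      then show False
        using False assms(4) by (simp add: restrict_pattern_def)
    qed
    ultimately show ?thesis
      using not_half False by (simp add: activation_def)
  qed
qed

lemma activation_always_solvable_cases:
  assumes "finite (verts G)" "always_solvable G" "v \<in> verts G"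
  shows "activation G v = 0 \<or> activation G v = 1"
proof -
  obtain s where "Nmul G s = ones G"
    using always_solvable_has_solution[OF assms(1,2) ones_in_patterns] by blast
  then show ?thesis
    using activation_always_solvable[OF assms(1,2) _ assms(3)] by simp
qed

lemma always_solvable_unit_rhs:
  assumes "finite (verts G)" "always_solvable G" "u \<in> verts G"
    and "\<And>v. v \<in> verts G \<Longrightarrow> Nmul G l v = (if v = u then c else 0)"
  shows "l u = c * of_bool (activation G u = 1)"
proof (cases "c = 0")
  case True
  then show ?thesis
    using always_solvable_kernel_eq_0[OF assms(1,2) _ assms(3)] assms(4) by simp
next
  case False
  obtain s where s: "Nmul G s = ones G"
    using always_solvable_has_solution[OF assms(1,2) ones_in_patterns] by blast
  have "l u = s u"
    using False assms s by (intro unit_solution_eq_ones_solution[of G u s l]) simp_all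
  with s show ?thesis
    using False activation_always_solvable[OF assms(1,2) _ assms(3)] by simp
qed

lemma always_solvable_unit_solution:
  assumes "finite (verts G)" "always_solvable G" "u \<in> verts G"
  obtains q where "q \<in> patterns G" "Nmul G q = (\<lambda>v. if v = u then 1 else 0)"
    "q u = of_bool (activation G u = 1)"
proof -
  have "(\<lambda>v. if v = u then 1 else 0) \<in> patterns G"
    using assms(3) by (auto simp: patterns_def)
  then obtain q where q: "q \<in> patterns G" "Nmul G q = (\<lambda>v. if v = u then 1 else 0)"
    using always_solvable_has_solution[OF assms(1,2)] by blast
  moreover have "q u = of_bool (activation G u = 1)"
    using always_solvable_unit_rhs[OF assms, of q 1] q(2) by simp
  ultimately show ?thesis
    by (rule that)
qed

section \<open>Joining two graphs by an edge\<close>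

definition joinable :: "'a graph \<Rightarrow> 'a \<Rightarrow> 'a \<Rightarrow> 'a graph \<Rightarrow> bool" where
  "joinable G1 u w G2 \<longleftrightarrow> simple_graph G1 \<and> simple_graph G2 \<and> verts G1 \<inter> verts G2 = {} \<and>
     u \<in> verts G1 \<and> w \<in> verts G2"

lemma joinableD:
  assumes "joinable G1 u w G2"
  shows "u \<in> verts G1" "w \<in> verts G2" "u \<notin> verts G2" "w \<notin> verts G1" "u \<noteq> w"
    and "verts G1 \<inter> verts G2 = {}" "verts G2 \<inter> verts G1 = {}"
  using assms by (auto simp: joinable_def)

lemma joinable_commute: "joinable G1 u w G2 \<Longrightarrow> joinable G2 w u G1"
  by (auto simp: joinable_def)

lemma joinable_finite: "joinable G1 u w G2 \<Longrightarrow> finite (verts G1) \<and> finite (verts G2)"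
  by (simp add: joinable_def simple_graph_def)

lemma edge_join_commute: "edge_join G1 u w G2 = edge_join G2 w u G1"
  by (auto simp: edge_join_def insert_commute)

lemma verts_edge_join [simp]: "verts (edge_join G1 u w G2) = verts G1 \<union> verts G2"
  by (simp add: edge_join_def verts_def)

lemma edges_edge_join [simp]: "edges (edge_join G1 u w G2) = edges G1 \<union> edges G2 \<union> {{u, w}}"
  by (simp add: edge_join_def edges_def)

lemma edge_join_swap:
  "edge_join B u y (edge_join C z y A) = edge_join C z y (edge_join B u y A)"
  by (auto simp: edge_join_def verts_def edges_def)

lemma edge_join_path3:
  "edge_join C z y (edge_join B u y A)
    = (verts B \<union> verts A \<union> verts C, edges B \<union> edges A \<union> edges C \<union> {{u, y}, {y, z}})"
  by (auto simp: edge_join_def verts_def edges_def insert_commute)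

lemma simple_graph_edge_join:
  assumes "joinable G1 u w G2"
  shows "simple_graph (edge_join G1 u w G2)"
  unfolding simple_graph_def
proof (intro conjI ballI)
  show "finite (verts (edge_join G1 u w G2))"
    using joinable_finite[OF assms] by simp
  fix e
  assume "e \<in> edges (edge_join G1 u w G2)"
  then consider "e \<in> edges G1" | "e \<in> edges G2" | "e = {u, w}"
    by auto
  then show "\<exists>a b. a \<noteq> b \<and> a \<in> verts (edge_join G1 u w G2) \<and> b \<in> verts (edge_join G1 u w G2) \<and> e = {a, b}"
  proof cases
    case 1
    then show ?thesis
      using assms unfolding joinable_def simple_graph_def by fastforce
  next
    case 2
    then show ?thesis
      using assms unfolding joinable_def simple_graph_def by fastforce
  next
    case 3
    then show ?thesis
      using joinableD[OF assms] by auto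
  qed
qed

lemma joinable_edge_join_reassoc:
  assumes "joinable B u y A" "joinable C z y A'" "A = edge_join C z y A'"
  shows "joinable B u y A'" "joinable C z y (edge_join B u y A')"
  using assms simple_graph_edge_join[of B u y A'] by (auto simp: joinable_def)

lemma adj_edge_join:
  assumes "joinable G1 u w G2"
  shows "adj (edge_join G1 u w G2) a b \<longleftrightarrow> adj G1 a b \<or> adj G2 a b \<or> {a, b} = {u, w}"
  using joinableD(5)[OF assms] unfolding adj_def by auto

lemma Nmul_edge_join_left:
  assumes "joinable G1 u w G2" "v \<in> verts G1"
  shows "Nmul (edge_join G1 u w G2) p v = Nmul G1 p v + (if v = u then p w else 0)"
proof -
  have "v \<notin> verts G2" "w \<in> verts G2" "w \<notin> verts G1" "finite (verts G1)"
    using assms by (auto simp: joinable_def simple_graph_def)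
  then have "\<not> adj G2 x v" "adj G1 x v \<Longrightarrow> x \<in> verts G1" for x
    using assms(1) adj_imp_verts[of G2 x v] adj_imp_verts[of G1 x v] by (auto simp: joinable_def)
  then have "closed_nbhd (edge_join G1 u w G2) v = closed_nbhd G1 v \<union> (if v = u then {w} else {})"
    using assms \<open>w \<in> verts G2\<close> \<open>w \<notin> verts G1\<close>
    by (auto simp: closed_nbhd_def adj_edge_join doubleton_eq_iff)
  moreover have "w \<notin> closed_nbhd G1 v" "finite (closed_nbhd G1 v)"
    using \<open>w \<notin> verts G1\<close> \<open>finite (verts G1)\<close> by (auto simp: closed_nbhd_def)
  ultimately show ?thesis
    using assms(2) by (cases "v = u") (simp_all add: Nmul_def add.commute)
qed

lemma Nmul_edge_join:
  assumes "joinable G1 u w G2"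
  shows "Nmul (edge_join G1 u w G2) p v
    = Nmul G1 p v + Nmul G2 p v + (if v = u then p w else 0) + (if v = w then p u else 0)"
proof -
  have "u \<in> verts G1" "w \<in> verts G2" "verts G1 \<inter> verts G2 = {}"
    using assms by (auto simp: joinable_def)
  moreover have "Nmul (edge_join G1 u w G2) p v = Nmul G2 p v + (if v = w then p u else 0)"
    if "v \<in> verts G2"
    using Nmul_edge_join_left[OF joinable_commute[OF assms] that] by (simp add: edge_join_commute)
  ultimately show ?thesis
    using Nmul_edge_join_left[OF assms, of v p]
    by (cases "v \<in> verts G1"; cases "v \<in> verts G2") (auto simp: Nmul_outside)
qed

lemma null_pattern_edge_join_rows:
  assumes "joinable G1 u w G2" "l \<in> null_patterns (edge_join G1 u w G2)"
  shows "v \<in> verts G1 \<Longrightarrow> Nmul G1 l v = (if v = u then l w else 0)"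
    and "v \<in> verts G2 \<Longrightarrow> Nmul G2 l v = (if v = w then l u else 0)"
proof -
  have "Nmul G1 l v + Nmul G2 l v + (if v = u then l w else 0) + (if v = w then l u else 0) = 0"
    using Nmul_edge_join[OF assms(1), of l v] assms(2) by (simp add: null_patterns_eq)
  moreover note joinableD[OF assms(1)]
  ultimately show "v \<in> verts G1 \<Longrightarrow> Nmul G1 l v = (if v = u then l w else 0)"
    and "v \<in> verts G2 \<Longrightarrow> Nmul G2 l v = (if v = w then l u else 0)"
    using Nmul_outside[of v G1 l] Nmul_outside[of v G2 l]
    by (auto simp: bit_add_eq_0_iff split: if_splits)
qed

lemma always_solvable_edge_join_activation_0:
  assumes j: "joinable G1 u w G2" and s: "always_solvable G1" "always_solvable G2"
    and a: "activation G1 u = 0"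
  shows "always_solvable (edge_join G1 u w G2)"
proof -
  note uw = joinableD[OF j]
  have fin: "finite (verts G1)" "finite (verts G2)" "finite (verts (edge_join G1 u w G2))"
    using joinable_finite[OF j] by simp_all
  have "l = 0" if l: "l \<in> null_patterns (edge_join G1 u w G2)" for l
  proof -
    note rows = null_pattern_edge_join_rows[OF j l]
    have "l u = 0"
      using always_solvable_unit_rhs[OF fin(1) s(1) uw(1) rows(1)] a by simp
    then have l2: "l x = 0" if "x \<in> verts G2" for x
      using always_solvable_kernel_eq_0[OF fin(2) s(2) _ that] rows(2) by simp
    then have l1: "l x = 0" if "x \<in> verts G1" for x
      using always_solvable_kernel_eq_0[OF fin(1) s(1) _ that] rows(1) uw(2) by simp
    show "l = 0"
      using l l1 l2 by (intro pattern_eq_0I[of l "edge_join G1 u w G2"]) (auto simp: null_patterns_def)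
  qed
  then show ?thesis
    by (rule always_solvableI[OF fin(3)])
qed

lemma always_solvable_right_of_edge_join_activation_0:
  assumes j: "joinable G1 u w G2" and s1: "always_solvable G1" and a: "activation G1 u = 0"
    and sG: "always_solvable (edge_join G1 u w G2)"
  shows "always_solvable G2"
proof -
  note uw = joinableD[OF j]
  have fin: "finite (verts G1)" "finite (verts G2)" "finite (verts (edge_join G1 u w G2))"
    using joinable_finite[OF j] by simp_all
  obtain q where q: "q \<in> patterns G1" "Nmul G1 q = (\<lambda>v. if v = u then 1 else 0)" "q u = 0"
    using always_solvable_unit_solution[OF fin(1) s1 uw(1)] a by auto
  have "m = 0" if m: "m \<in> null_patterns G2" for m
  proof -
    \<comment> \<open>extend m to G1 by the solution for m w e_u\<close>
    let ?l = "m + (\<lambda>x. m w * q x)"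
    have "q w = 0" "m u = 0"
      using q(1) m uw by (auto simp: pattern_outside null_patterns_def)
    moreover have "Nmul G2 q = 0" "Nmul G1 m = 0" "Nmul G2 m = 0"
      using Nmul_disjoint_pattern[OF q(1) uw(6)] Nmul_disjoint_pattern[OF _ uw(7), of m] m
      by (auto simp: null_patterns_eq)
    ultimately have "Nmul (edge_join G1 u w G2) ?l = 0"
      using q(2,3) by (simp add: fun_eq_iff Nmul_edge_join[OF j] Nmul_add Nmul_scale)
    moreover have "?l \<in> patterns (edge_join G1 u w G2)"
      using q(1) m by (auto simp: patterns_def null_patterns_def)
    ultimately have "?l \<in> null_patterns (edge_join G1 u w G2)"
      by (simp add: null_patterns_eq)
    then have "?l = 0"
      by (rule always_solvableD[OF fin(3) sG])
    have "m x = 0" if "x \<in> verts G2" for x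
    proof -
      have "q x = 0"
        using pattern_outside[OF q(1)] that uw(6) by blast
      then show ?thesis
        using fun_cong[OF \<open>?l = 0\<close>, of x] by simp
    qed
    then show "m = 0"
      using m by (intro pattern_eq_0I) (auto simp: null_patterns_def)
  qed
  then show ?thesis
    by (rule always_solvableI[OF fin(2)])
qed

lemma half_activated_edge_join:
  assumes j: "joinable G1 u w G2" and s: "always_solvable G1" "always_solvable G2"
    and a: "activation G1 u = 1" "activation G2 w = 1"
  shows "half_activated (edge_join G1 u w G2) w"
proof -
  note uw = joinableD[OF j]
  have fin: "finite (verts G1)" "finite (verts G2)"
    using joinable_finite[OF j] by simp_all
  obtain q1 where q1: "q1 \<in> patterns G1" "Nmul G1 q1 = (\<lambda>v. if v = u then 1 else 0)" "q1 u = 1"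
    using always_solvable_unit_solution[OF fin(1) s(1) uw(1)] a by auto
  obtain q2 where q2: "q2 \<in> patterns G2" "Nmul G2 q2 = (\<lambda>v. if v = w then 1 else 0)" "q2 w = 1"
    using always_solvable_unit_solution[OF fin(2) s(2) uw(2)] a by auto
  have "Nmul G1 q2 = 0" "Nmul G2 q1 = 0" "q1 w = 0" "q2 u = 0"
    using Nmul_disjoint_pattern[OF q2(1) uw(7)] Nmul_disjoint_pattern[OF q1(1) uw(6)]
      pattern_outside[OF q1(1) uw(4)] pattern_outside[OF q2(1) uw(3)] by simp_all
  then have "Nmul (edge_join G1 u w G2) (q1 + q2) = 0"
    using q1(2,3) q2(2,3) uw(5) by (simp add: fun_eq_iff Nmul_edge_join[OF j] Nmul_add)
  moreover have "q1 + q2 \<in> patterns (edge_join G1 u w G2)"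
    using q1(1) q2(1) by (auto simp: patterns_def)
  ultimately show ?thesis
    using q1(3) q2(3) \<open>q1 w = 0\<close> by (auto simp: half_activated_def null_patterns_eq)
qed

lemma half_activated_of_edge_join:
  assumes j: "joinable G1 u w G2" and "always_solvable (edge_join G1 u w G2)"
    and "\<not> always_solvable G2"
  shows "half_activated G2 w"
proof -
  note uw = joinableD[OF j]
  have fin: "finite (verts G2)" "finite (verts (edge_join G1 u w G2))"
    using joinable_finite[OF j] by simp_all
  obtain m where m: "m \<in> null_patterns G2" "m \<noteq> 0"
    using assms(3) fin(1) always_solvableI by blast
  have "m w = 1"
  proof (rule ccontr)
    assume "m w \<noteq> 1"
    then have "Nmul (edge_join G1 u w G2) m = 0"
      using m(1) Nmul_disjoint_pattern[OF _ uw(7), of m] pattern_outside[OF _ uw(3), of m]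
      by (simp add: fun_eq_iff Nmul_edge_join[OF j] null_patterns_eq)
    then have "m \<in> null_patterns (edge_join G1 u w G2)"
      using m(1) by (auto simp: null_patterns_eq patterns_def)
    then show False
      using always_solvableD[OF fin(2) assms(2)] m(2) by blast
  qed
  then show ?thesis
    using m(1) by (auto simp: half_activated_def)
qed

lemma Nmul_left_of_edge_join_solution:
  assumes j: "joinable G1 u w G2" and s: "Nmul (edge_join G1 u w G2) s = ones (edge_join G1 u w G2)"
    and "s w = 1" "v \<in> verts G1"
  shows "Nmul G1 s v = 1 + (if v = u then 1 else 0)"
proof -
  note uw = joinableD[OF j]
  have "v \<notin> verts G2" "v \<noteq> w"
    using assms(4) uw by auto
  then show ?thesis
    using fun_cong[OF s, of v] assms(3,4)
    by (simp add: Nmul_edge_join[OF j] Nmul_outside ones_def add.commute bit_add_eq_0_iff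
        split: if_splits)
qed

lemma always_solvable_left_of_edge_join:
  assumes j: "joinable G1 u w G2" and sG: "always_solvable (edge_join G1 u w G2)"
    and s: "Nmul (edge_join G1 u w G2) s = ones (edge_join G1 u w G2)" "s w = 1"
  shows "always_solvable G1"
proof -
  note uw = joinableD[OF j]
  have fin: "finite (verts G1)" "finite (verts (edge_join G1 u w G2))"
    using joinable_finite[OF j] by simp_all
  have "l = 0" if l: "l \<in> null_patterns G1" for l
  proof -
    have "0 = (\<Sum>v\<in>verts G1. Nmul G1 l v * s v)"
      using l by (simp add: null_patterns_eq)
    also have "\<dots> = (\<Sum>v\<in>verts G1. l v * Nmul G1 s v)"
      using fin(1) by (rule Nmul_symmetric[symmetric])
    also have "\<dots> = (\<Sum>v\<in>verts G1. l v + (if v = u then l v else 0))"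
      using Nmul_left_of_edge_join_solution[OF j s] by (intro sum.cong) (simp_all add: distrib_left)
    also have "\<dots> = (\<Sum>v\<in>verts G1. l v) + l u"
      using fin(1) uw(1) by (simp add: sum.distrib)
    also have "(\<Sum>v\<in>verts G1. l v) = (\<Sum>v\<in>verts G1. l v * Nmul G1 l v)"
      using fin(1) by (rule sum_mult_Nmul_self[symmetric])
    finally have "l u = 0"
      using l by (simp add: null_patterns_eq)
    then have "Nmul (edge_join G1 u w G2) l = 0"
      using l Nmul_disjoint_pattern[OF _ uw(6), of l] pattern_outside[OF _ uw(4), of l]
      by (simp add: fun_eq_iff Nmul_edge_join[OF j] null_patterns_eq)
    then have "l \<in> null_patterns (edge_join G1 u w G2)"
      using l by (auto simp: null_patterns_eq patterns_def)
    then show "l = 0"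
      using always_solvableD[OF fin(2) sG] by blast
  qed
  then show ?thesis
    by (rule always_solvableI[OF fin(1)])
qed

lemma edge_join_solution_eq_0:
  assumes j: "joinable G1 u w G2" and "always_solvable G1"
    and s: "Nmul (edge_join G1 u w G2) s = ones (edge_join G1 u w G2)" "s w = 1"
  shows "s u = 0"
proof -
  note uw = joinableD[OF j]
  have fin: "finite (verts G1)"
    using joinable_finite[OF j] by simp
  obtain s1 where s1: "Nmul G1 s1 = ones G1"
    using always_solvable_has_solution[OF fin assms(2) ones_in_patterns] by blast
  have "Nmul G1 (s + s1) v = (if v = u then 1 else 0)" if "v \<in> verts G1" for v
    using Nmul_left_of_edge_join_solution[OF j s that] s1 that
    by (cases "v = u") (simp_all add: Nmul_add ones_def)
  then have "(s + s1) u = s1 u"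
    using unit_solution_eq_ones_solution[OF fin uw(1) s1] by blast
  then show ?thesis
    by simp
qed

lemma edge_join_solution_right:
  assumes j: "joinable G1 u w G2"
    and s: "Nmul (edge_join G1 u w G2) s = ones (edge_join G1 u w G2)" "s u = 0"
  shows "Nmul G2 s = ones G2"
proof
  fix v
  note uw = joinableD[OF j]
  show "Nmul G2 s v = ones G2 v"
  proof (cases "v \<in> verts G2")
    case True
    then have "v \<notin> verts G1" "v \<noteq> u"
      using uw by auto
    then have "Nmul (edge_join G1 u w G2) s v = Nmul G2 s v"
      using s(2) by (simp add: Nmul_edge_join[OF j] Nmul_outside)
    then show ?thesis
      using fun_cong[OF s(1), of v] True by (simp add: ones_def)
  qed (simp add: Nmul_outside ones_def)
qed

lemma edge_join_null_pattern_eq_0: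
  assumes j: "joinable G1 u w G2" and s: "always_solvable G1" "always_solvable G2"
    and l: "l \<in> null_patterns (edge_join G1 u w G2)" "l w = 0"
  shows "l = 0"
proof -
  note uw = joinableD[OF j]
  have fin: "finite (verts G1)" "finite (verts G2)"
    using joinable_finite[OF j] by simp_all
  note rows = null_pattern_edge_join_rows[OF j l(1)]
  have l1: "l x = 0" if "x \<in> verts G1" for x
    using always_solvable_kernel_eq_0[OF fin(1) s(1) _ that] rows(1) l(2) by simp
  have l2: "l x = 0" if "x \<in> verts G2" for x
    using always_solvable_kernel_eq_0[OF fin(2) s(2) _ that] rows(2) l1[OF uw(1)] by simp
  show "l = 0"
    using l(1) l1 l2 by (intro pattern_eq_0I[of l "edge_join G1 u w G2"]) (auto simp: null_patterns_def)
qed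

lemma null_patterns_edge_join_subset:
  assumes j: "joinable G1 u w G2" and s: "always_solvable G1" "always_solvable G2"
    and m: "m \<in> null_patterns (edge_join G1 u w G2)" "m \<noteq> 0"
  shows "null_patterns (edge_join G1 u w G2) \<subseteq> {0, m}"
proof
  fix l
  assume l: "l \<in> null_patterns (edge_join G1 u w G2)"
  have "m w = 1"
    using edge_join_null_pattern_eq_0[OF j s m(1)] m(2) by auto
  show "l \<in> {0, m}"
  proof (cases "l w = 0")
    case True
    then show ?thesis
      using edge_join_null_pattern_eq_0[OF j s l] by simp
  next
    case False
    have "l + m \<in> null_patterns (edge_join G1 u w G2)"
      using l m(1) by (auto simp: null_patterns_eq patterns_def Nmul_add)
    moreover have "(l + m) w = 0"
      using False \<open>m w = 1\<close> by simp
    ultimately have "l + m = 0"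
      by (rule edge_join_null_pattern_eq_0[OF j s])
    then have "l = m"
      by (simp add: fun_eq_iff bit_add_eq_0_iff)
    then show ?thesis
      by simp
  qed
qed

lemma always_solvable_edge_join_unique_null_pattern:
  assumes j: "joinable G1 y x G2" and s1: "always_solvable G1" and a: "activation G1 y = 1"
    and m: "m \<in> null_patterns G2" "m x = 1" and null2: "null_patterns G2 \<subseteq> {0, m}"
  shows "always_solvable (edge_join G1 y x G2)"
proof -
  note yx = joinableD[OF j]
  have fin: "finite (verts G1)" "finite (verts G2)" "finite (verts (edge_join G1 y x G2))"
    using joinable_finite[OF j] by simp_all
  have "l = 0" if l: "l \<in> null_patterns (edge_join G1 y x G2)" for l
  proof -
    note rows = null_pattern_edge_join_rows[OF j l]
    have "l y = l x"
      using always_solvable_unit_rhs[OF fin(1) s1 yx(1) rows(1)] a by simp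
    have "half_activated G2 x"
      using m by (auto simp: half_activated_def)
    have "l x = 0"
    proof (rule ccontr)
      assume "l x \<noteq> 0"
      then have "Nmul G2 l v = (if v = x then 1 else 0)" if "v \<in> verts G2" for v
        using rows(2)[OF that] \<open>l y = l x\<close> by simp
      then show False
        by (rule no_unit_solution_at_half_activated[OF fin(2) \<open>half_activated G2 x\<close>])
    qed
    have l1: "l v = 0" if "v \<in> verts G1" for v
      using always_solvable_kernel_eq_0[OF fin(1) s1 _ that] rows(1) \<open>l x = 0\<close> by simp
    have "Nmul G2 l v = 0" for v
      using rows(2)[of v] \<open>l x = 0\<close> \<open>l y = l x\<close> by (cases "v \<in> verts G2") (simp_all add: Nmul_outside)
    then have "restrict_pattern G2 l \<in> null_patterns G2"
      using restrict_pattern_in_patterns[of G2 l] by (simp add: null_patterns_eq fun_eq_iff)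
    moreover have "restrict_pattern G2 l x \<noteq> m x"
      using \<open>l x = 0\<close> m(2) by (simp add: restrict_pattern_def)
    ultimately have "restrict_pattern G2 l = 0"
      using null2 by blast
    have l2: "l v = 0" if "v \<in> verts G2" for v
      using fun_cong[OF \<open>restrict_pattern G2 l = 0\<close>, of v] that by (simp add: restrict_pattern_def)
    show "l = 0"
      using l l1 l2 by (intro pattern_eq_0I[of l "edge_join G1 y x G2"]) (auto simp: null_patterns_def)
  qed
  then show ?thesis
    by (rule always_solvableI[OF fin(3)])
qed

lemma null_pattern_star_extension:
  assumes j1: "joinable B u y A" and j2: "joinable C z y (edge_join B u y A)"
    and qB: "qB \<in> patterns B" "Nmul B qB = (\<lambda>v. if v = u then 1 else 0)" "qB u = 1"
    and qC: "qC \<in> patterns C" "Nmul C qC = (\<lambda>v. if v = z then 1 else 0)" "qC z = 1"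
    and l: "l \<in> null_patterns A"
  shows "l + (\<lambda>x. l y * qB x) + (\<lambda>x. l y * qC x)
    \<in> null_patterns (edge_join C z y (edge_join B u y A))"
proof -
  define p where "p = l + (\<lambda>x. l y * qB x) + (\<lambda>x. l y * qC x)"
  note uy = joinableD[OF j1] and zy = joinableD[OF j2]
  have d: "verts B \<inter> verts C = {}" "verts C \<inter> verts B = {}" "verts A \<inter> verts C = {}"
      "verts C \<inter> verts A = {}" "u \<notin> verts C" "z \<notin> verts A" "z \<notin> verts B"
    using zy(3,6) uy(1) by auto
  have "Nmul B l = 0" "Nmul C l = 0" "Nmul A l = 0" "l u = 0" "l z = 0"
    using l Nmul_disjoint_pattern[of l A] pattern_outside[of l A] uy zy(3) d
    by (auto simp: null_patterns_eq)
  moreover have "Nmul A qB = 0" "Nmul C qB = 0" "qB y = 0" "qB z = 0"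
    using qB(1) Nmul_disjoint_pattern[of qB B] pattern_outside[of qB B] uy zy(3) d by auto
  moreover have "Nmul A qC = 0" "Nmul B qC = 0" "qC y = 0" "qC u = 0"
    using qC(1) Nmul_disjoint_pattern[of qC C] pattern_outside[of qC C] uy zy(4) d by auto
  ultimately have "Nmul C p v = (if v = z then l y else 0)" "Nmul B p v = (if v = u then l y else 0)"
      "Nmul A p v = 0" "p y = l y" "p u = l y" "p z = l y" for v
    using qB(2,3) qC(2,3) by (simp_all add: p_def Nmul_add Nmul_scale)
  moreover have "Nmul (edge_join C z y (edge_join B u y A)) p v
      = Nmul C p v + (Nmul B p v + Nmul A p v + (if v = u then p y else 0)
        + (if v = y then p u else 0)) + (if v = z then p y else 0) + (if v = y then p z else 0)" for v
    by (simp only: Nmul_edge_join[OF j2] Nmul_edge_join[OF j1])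
  ultimately have "Nmul (edge_join C z y (edge_join B u y A)) p v = 0" for v
    using uy(5) zy(5) d(7) uy(1) by (cases "v = u"; cases "v = y"; cases "v = z") simp_all
  moreover have "p \<in> patterns (edge_join C z y (edge_join B u y A))"
    using l qB(1) qC(1) by (auto simp: p_def patterns_def null_patterns_def)
  ultimately have "p \<in> null_patterns (edge_join C z y (edge_join B u y A))"
    by (simp add: null_patterns_eq fun_eq_iff)
  then show ?thesis
    by (simp only: p_def)
qed

lemma always_solvable_of_star:
  assumes j1: "joinable B u y A" and j2: "joinable C z y (edge_join B u y A)"
    and s: "always_solvable B" "always_solvable C" and a: "activation B u = 1" "activation C z = 1"
    and sT: "always_solvable (edge_join C z y (edge_join B u y A))"
  shows "always_solvable A"
proof -
  note uy = joinableD[OF j1] and zy = joinableD[OF j2]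
  have fin: "finite (verts A)" "finite (verts B)" "finite (verts C)"
      "finite (verts (edge_join C z y (edge_join B u y A)))"
    using joinable_finite[OF j1] joinable_finite[OF j2] by simp_all
  obtain qB where qB: "qB \<in> patterns B" "Nmul B qB = (\<lambda>v. if v = u then 1 else 0)" "qB u = 1"
    using always_solvable_unit_solution[OF fin(2) s(1) uy(1)] a by auto
  obtain qC where qC: "qC \<in> patterns C" "Nmul C qC = (\<lambda>v. if v = z then 1 else 0)" "qC z = 1"
    using always_solvable_unit_solution[OF fin(3) s(2) zy(1)] a by auto
  have "l = 0" if l: "l \<in> null_patterns A" for l
  proof -
    have p0: "l + (\<lambda>x. l y * qB x) + (\<lambda>x. l y * qC x) = 0"
      using null_pattern_star_extension[OF j1 j2 qB qC l] by (rule always_solvableD[OF fin(4) sT])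
    have "l x = 0" if "x \<in> verts A" for x
    proof -
      have "x \<notin> verts B" "x \<notin> verts C"
        using that uy(6) zy(6) by auto
      then have "qB x = 0" "qC x = 0"
        using pattern_outside[OF qB(1)] pattern_outside[OF qC(1)] by simp_all
      then show ?thesis
        using fun_cong[OF p0, of x] by simp
    qed
    then show "l = 0"
      using l by (intro pattern_eq_0I) (auto simp: null_patterns_def)
  qed
  then show ?thesis
    by (rule always_solvableI[OF fin(1)])
qed

lemma edge_join_solution_cases:
  assumes j: "joinable B u y A" and sT: "always_solvable (edge_join B u y A)"
    and s: "Nmul (edge_join B u y A) s = ones (edge_join B u y A)" "s y = 1"
  obtains "always_solvable A" "activation B u = 0" "activation A y = 1"
    | "\<not> always_solvable A" "activation B u = 1" "half_activated A y"
proof -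
  note uy = joinableD[OF j]
  have fin: "finite (verts B)" "finite (verts A)" "finite (verts (edge_join B u y A))"
    using joinable_finite[OF j] by simp_all
  have sB: "always_solvable B"
    using always_solvable_left_of_edge_join[OF j sT s] .
  have "s u = 0"
    using edge_join_solution_eq_0[OF j sB s] .
  have aB: "activation B u = 0 \<or> activation B u = 1"
    using activation_always_solvable_cases[OF fin(1) sB uy(1)] .
  show ?thesis
  proof (cases "always_solvable A")
    case True
    have "activation A y = 1"
      using activation_always_solvable[OF fin(2) True edge_join_solution_right[OF j s(1) \<open>s u = 0\<close>] uy(2)]
        s(2) by simp
    moreover have "activation B u \<noteq> 1"
      using half_activated_edge_join[OF j sB True _ \<open>activation A y = 1\<close>]
        always_solvable_not_half_activated[OF fin(3) sT] by blast
    ultimately show ?thesis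
      using that(1) True aB by blast
  next
    case False
    have "half_activated A y"
      using half_activated_of_edge_join[OF j sT False] .
    moreover have "activation B u \<noteq> 0"
      using always_solvable_right_of_edge_join_activation_0[OF j sB _ sT] False by blast
    ultimately show ?thesis
      using that(2) False aB by blast
  qed
qed

section \<open>Trees\<close>

lemma tree_simple_graph: "tree T \<Longrightarrow> simple_graph T"
  by (simp add: tree_def)

lemma tree_finite: "tree T \<Longrightarrow> finite (verts T)"
  by (simp add: tree_def simple_graph_def)

lemma rtranclp_adj_edge_join_left:
  assumes j: "joinable G1 u w G2" and "(adj (edge_join G1 u w G2))\<^sup>*\<^sup>* u v" "v \<in> verts G1"
  shows "(adj G1)\<^sup>*\<^sup>* u v"
  using assms(2,3)
proof (induction rule: rtranclp_induct)
  case (step a b)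
  note uw = joinableD[OF j]
  consider "adj G1 a b" | "adj G2 a b" | "{a, b} = {u, w}"
    using step.hyps(2) adj_edge_join[OF j] by blast
  then show ?case
  proof cases
    case 1
    then show ?thesis
      using step adj_imp_verts j by (meson joinable_def rtranclp.rtrancl_into_rtrancl)
  next
    case 2
    then show ?thesis
      using step.prems adj_imp_verts[of G2 a b] j uw(6) by (auto simp: joinable_def)
  next
    case 3
    then have "b = u"
      using step.prems uw(4) by (auto simp: doubleton_eq_iff)
    then show ?thesis
      by simp
  qed
qed simp

lemma connected_graph_edge_join_left:
  assumes j: "joinable G1 u w G2" and c: "connected_graph (edge_join G1 u w G2)"
  shows "connected_graph G1"
  unfolding connected_graph_def
proof (intro conjI ballI)
  note uw = joinableD[OF j]
  show "verts G1 \<noteq> {}"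
    using uw(1) by blast
  have reach: "(adj G1)\<^sup>*\<^sup>* u v" if "v \<in> verts G1" for v
    using rtranclp_adj_edge_join_left[OF j _ that] c uw(1) that by (simp add: connected_graph_def)
  have "symp (adj G1)\<^sup>*\<^sup>*"
    by (intro symp_rtranclp sympI) (simp add: adj_sym)
  then show "(adj G1)\<^sup>*\<^sup>* a b" if "a \<in> verts G1" "b \<in> verts G1" for a b
    using reach[OF that(1)] reach[OF that(2)] by (meson rtranclp_trans sympD)
qed

lemma tree_edge_join_left:
  assumes j: "joinable G1 u w G2" and t: "tree (edge_join G1 u w G2)"
  shows "tree G1"
proof -
  have "is_cycle (edge_join G1 u w G2) cs" if "is_cycle G1 cs" for cs
    using that by (auto simp: is_cycle_def adj_edge_join[OF j])
  then show ?thesis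
    using t connected_graph_edge_join_left[OF j] j by (auto simp: tree_def joinable_def)
qed

lemma tree_edge_join_right: "joinable G1 u w G2 \<Longrightarrow> tree (edge_join G1 u w G2) \<Longrightarrow> tree G2"
  using tree_edge_join_left[OF joinable_commute] by (simp add: edge_join_commute)

lemma is_cycle_of_rtrancl_path:
  assumes G: "simple_graph G" and p: "rtrancl_path (adj G) u xs y" "distinct (u # xs)"
    and len: "2 \<le> length xs" and "adj G y u"
  shows "is_cycle G (u # xs)"
proof -
  have step: "adj G ((u # xs) ! i) (xs ! i)" if "i < length xs" for i
    using rtrancl_path_nth[OF p(1) that] .
  have "set xs \<subseteq> verts G"
    using step adj_imp_verts[OF G] by (metis in_set_conv_nth subsetI)
  moreover have "u \<in> verts G"
    using adj_imp_verts[OF G \<open>adj G y u\<close>] by simp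
  moreover have "last xs = y"
    using rtrancl_path_last[OF p(1)] len by (cases xs) auto
  ultimately show ?thesis
    using p(2) len step \<open>adj G y u\<close> by (auto simp: is_cycle_def)
qed

lemma tree_no_path_avoiding_edge:
  assumes t: "tree T" and uy: "adj T u y"
  shows "\<not> (\<lambda>a b. adj T a b \<and> {a, b} \<noteq> {u, y})\<^sup>*\<^sup>* u y"
proof
  let ?R = "\<lambda>a b. adj T a b \<and> {a, b} \<noteq> {u, y}"
  assume "?R\<^sup>*\<^sup>* u y"
  then obtain xs where "rtrancl_path ?R u xs y"
    by (auto simp: rtranclp_eq_rtrancl_path)
  then obtain xs' where p: "rtrancl_path ?R u xs' y" "distinct (u # xs')"
    by (rule rtrancl_path_distinct)
  have "xs' \<noteq> []"
    using p(1) uy by (auto simp: adj_def elim: rtrancl_path.cases)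
  moreover have "xs' \<noteq> [y]"
    using rtrancl_path_nth[OF p(1), of 0] by auto
  moreover have "last xs' = y" if "xs' \<noteq> []"
    using rtrancl_path_last[OF p(1) that] .
  ultimately have "2 \<le> length xs'"
    by (cases xs' rule: remdups_adj.cases) auto
  moreover have "rtrancl_path (adj T) u xs' y"
    using rtrancl_path_mono[OF p(1)] by blast
  moreover have "adj T y u"
    using uy by (simp add: adj_sym)
  ultimately have "is_cycle T (u # xs')"
    using is_cycle_of_rtrancl_path[OF tree_simple_graph[OF t] _ p(2)] by blast
  then show False
    using t by (auto simp: tree_def)
qed

definition induced_subgraph :: "'a graph \<Rightarrow> 'a set \<Rightarrow> 'a graph" where
  "induced_subgraph G S = (S, {e \<in> edges G. e \<subseteq> S})"

lemma simple_graph_induced_subgraph: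
  assumes "simple_graph G" "S \<subseteq> verts G"
  shows "simple_graph (induced_subgraph G S)"
  using assms finite_subset unfolding simple_graph_def induced_subgraph_def verts_def edges_def
  by fastforce

lemma edge_join_induced_subgraphs:
  assumes s: "simple_graph T" and S: "S \<subseteq> verts T" "u \<in> S" "y \<in> verts T" "y \<notin> S"
    and uy: "{u, y} \<in> edges T"
    and closed: "\<And>a b. {a, b} \<in> edges T \<Longrightarrow> {a, b} \<noteq> {u, y} \<Longrightarrow> a \<in> S \<Longrightarrow> b \<in> S"
  shows "joinable (induced_subgraph T S) u y (induced_subgraph T (verts T - S))"
    and "T = edge_join (induced_subgraph T S) u y (induced_subgraph T (verts T - S))"
proof -
  show "joinable (induced_subgraph T S) u y (induced_subgraph T (verts T - S))"
    using simple_graph_induced_subgraph[OF s] S by (auto simp: joinable_def induced_subgraph_def verts_def)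
  have "e \<subseteq> S \<or> e \<subseteq> verts T - S" if "e \<in> edges T" "e \<noteq> {u, y}" for e
  proof -
    obtain a b where "a \<in> verts T" "b \<in> verts T" "e = {a, b}"
      using s \<open>e \<in> edges T\<close> by (auto simp: simple_graph_def)
    then show ?thesis
      using closed[of a b] closed[of b a] that by (auto simp: insert_commute)
  qed
  then have "edges T = {e \<in> edges T. e \<subseteq> S} \<union> {e \<in> edges T. e \<subseteq> verts T - S} \<union> {{u, y}}"
    using uy by blast
  then show "T = edge_join (induced_subgraph T S) u y (induced_subgraph T (verts T - S))"
    using S(1) by (simp add: edge_join_def induced_subgraph_def verts_def edges_def prod_eq_iff Un_absorb1)
qed

lemma tree_split:
  assumes t: "tree T" and uy: "adj T u y"
  obtains B A where "joinable B u y A" "T = edge_join B u y A"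
proof -
  have s: "simple_graph T"
    using t by (rule tree_simple_graph)
  define R where "R a b \<longleftrightarrow> adj T a b \<and> {a, b} \<noteq> {u, y}" for a b
  define S where "S = {v. R\<^sup>*\<^sup>* u v}"
  have "S \<subseteq> verts T"
  proof
    fix v
    assume "v \<in> S"
    then have "R\<^sup>*\<^sup>* u v"
      by (simp add: S_def)
    then show "v \<in> verts T"
      by (induction rule: rtranclp_induct) (use adj_imp_verts[OF s] uy in \<open>auto simp: R_def\<close>)
  qed
  moreover have "u \<in> S" "y \<in> verts T" "{u, y} \<in> edges T"
    using adj_imp_verts[OF s uy] uy by (auto simp: S_def adj_def)
  moreover have "y \<notin> S"
    using tree_no_path_avoiding_edge[OF t uy] by (simp add: S_def R_def[abs_def])
  moreover have "b \<in> S" if "{a, b} \<in> edges T" "{a, b} \<noteq> {u, y}" "a \<in> S" for a b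
  proof -
    have "a \<noteq> b"
      using s that(1) by (auto simp: simple_graph_def doubleton_eq_iff)
    then have "R a b"
      using that(1,2) by (simp add: R_def adj_def)
    then show ?thesis
      using that(3) by (auto simp: S_def intro: rtranclp.rtrancl_into_rtrancl)
  qed
  ultimately show ?thesis
    using edge_join_induced_subgraphs[OF s] that by metis
qed

lemma tree_has_neighbour:
  assumes t: "tree T" and c: "2 \<le> card (verts T)" and y: "y \<in> verts T"
  obtains u where "adj T u y"
proof -
  have "\<not> verts T \<subseteq> {y}"
    using c card_mono[of "{y}" "verts T"] by auto
  then obtain v where "v \<in> verts T" "v \<noteq> y"
    by blast
  then have "(adj T)\<^sup>*\<^sup>* y v"
    using t y by (simp add: tree_def connected_graph_def)
  then obtain u where "adj T y u"
    using \<open>v \<noteq> y\<close> by (metis converse_rtranclpE)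
  then show ?thesis
    using that by (simp add: adj_sym)
qed

section \<open>Decompositions of always solvable trees\<close>

(* Named after the activation numbers at the joining vertices, "half" standing for -1. *)
definition split_0_1 :: "'a graph \<Rightarrow> bool" where
  "split_0_1 T \<longleftrightarrow>
     (\<exists>T1 T2 u w. tree T1 \<and> tree T2 \<and> verts T1 \<inter> verts T2 = {} \<and>
        always_solvable T1 \<and> always_solvable T2 \<and> u \<in> verts T1 \<and> w \<in> verts T2 \<and>
        activation T1 u = 0 \<and> activation T2 w = 1 \<and> T = edge_join T1 u w T2)"

definition split_1_1_1 :: "'a graph \<Rightarrow> bool" where
  "split_1_1_1 T \<longleftrightarrow>
     (\<exists>T1 T2 T3 x y z. tree T1 \<and> tree T2 \<and> tree T3 \<and>
        verts T1 \<inter> verts T2 = {} \<and> verts T1 \<inter> verts T3 = {} \<and> verts T2 \<inter> verts T3 = {} \<and>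
        always_solvable T1 \<and> always_solvable T2 \<and> always_solvable T3 \<and>
        x \<in> verts T1 \<and> y \<in> verts T2 \<and> z \<in> verts T3 \<and>
        activation T1 x = 1 \<and> activation T2 y = 1 \<and> activation T3 z = 1 \<and>
        T = (verts T1 \<union> verts T2 \<union> verts T3,
             edges T1 \<union> edges T2 \<union> edges T3 \<union> {{x, y}, {y, z}}))"

definition split_1_half :: "'a graph \<Rightarrow> bool" where
  "split_1_half T \<longleftrightarrow>
     (\<exists>T1 T2 T3 a b. tree T1 \<and> tree T2 \<and> tree T3 \<and>
        verts T1 \<inter> verts T2 = {} \<and> verts T1 \<inter> verts T3 = {} \<and> verts T2 \<inter> verts T3 = {} \<and>
        always_solvable T1 \<and> always_solvable T2 \<and> always_solvable T3 \<and>
        a \<in> verts T1 \<and> b \<in> verts T2 \<and> activation T1 a = 1 \<and> activation T2 b = 1 \<and>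
        (let X = edge_join T1 a b T2 in
          \<exists>y x. y \<in> verts T3 \<and> x \<in> verts X \<and> activation T3 y = 1 \<and> activation X x = -1 \<and>
            T = edge_join T3 y x X))"

lemma split_0_1I:
  assumes "joinable T1 u w T2" "tree T1" "tree T2" "always_solvable T1" "always_solvable T2"
    "activation T1 u = 0" "activation T2 w = 1"
  shows "split_0_1 (edge_join T1 u w T2)"
  unfolding split_0_1_def using assms joinableD[OF assms(1)]
  by (intro exI[of _ T1] exI[of _ T2] exI[of _ u] exI[of _ w]) simp

lemma always_solvable_of_split_0_1:
  assumes "split_0_1 T"
  shows "always_solvable T"
proof -
  obtain T1 T2 u w where T: "tree T1" "tree T2" "verts T1 \<inter> verts T2 = {}" "always_solvable T1"
      "always_solvable T2" "u \<in> verts T1" "w \<in> verts T2" "activation T1 u = 0"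
      "T = edge_join T1 u w T2"
    using assms unfolding split_0_1_def by blast
  then have "joinable T1 u w T2"
    by (simp add: joinable_def tree_simple_graph)
  then show ?thesis
    using always_solvable_edge_join_activation_0[OF _ T(4,5,8)] T(9) by simp
qed

lemma split_1_1_1I:
  assumes "tree T1" "tree T2" "tree T3"
      "verts T1 \<inter> verts T2 = {}" "verts T1 \<inter> verts T3 = {}" "verts T2 \<inter> verts T3 = {}"
      "always_solvable T1" "always_solvable T2" "always_solvable T3"
      "x \<in> verts T1" "y \<in> verts T2" "z \<in> verts T3"
      "activation T1 x = 1" "activation T2 y = 1" "activation T3 z = 1"
  shows "split_1_1_1 (edge_join T3 z y (edge_join T1 x y T2))"
  unfolding split_1_1_1_def edge_join_path3 using assms by blast

lemma split_1_1_1E: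
  assumes "split_1_1_1 T"
  obtains T1 T2 T3 x y z where "tree T1" "tree T2" "tree T3"
      "verts T1 \<inter> verts T2 = {}" "verts T1 \<inter> verts T3 = {}" "verts T2 \<inter> verts T3 = {}"
      "always_solvable T1" "always_solvable T2" "always_solvable T3"
      "x \<in> verts T1" "y \<in> verts T2" "z \<in> verts T3"
      "activation T1 x = 1" "activation T2 y = 1" "activation T3 z = 1"
      "T = (verts T1 \<union> verts T2 \<union> verts T3, edges T1 \<union> edges T2 \<union> edges T3 \<union> {{x, y}, {y, z}})"
  using assms unfolding split_1_1_1_def by (elim exE conjE) (rule that)

lemma split_1_halfI:
  assumes "tree T1" "tree T2" "tree T3"
      "verts T1 \<inter> verts T2 = {}" "verts T1 \<inter> verts T3 = {}" "verts T2 \<inter> verts T3 = {}"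
      "always_solvable T1" "always_solvable T2" "always_solvable T3"
      "a \<in> verts T1" "b \<in> verts T2" "y \<in> verts T3" "x \<in> verts (edge_join T1 a b T2)"
      "activation T1 a = 1" "activation T2 b = 1" "activation T3 y = 1"
      "activation (edge_join T1 a b T2) x = -1"
  shows "split_1_half (edge_join T3 y x (edge_join T1 a b T2))"
  unfolding split_1_half_def Let_def using assms by blast

lemma split_1_halfE:
  assumes "split_1_half T"
  obtains T1 T2 T3 a b y x where "tree T1" "tree T2" "tree T3"
      "verts T1 \<inter> verts T2 = {}" "verts T1 \<inter> verts T3 = {}" "verts T2 \<inter> verts T3 = {}"
      "always_solvable T1" "always_solvable T2" "always_solvable T3"
      "a \<in> verts T1" "b \<in> verts T2" "y \<in> verts T3" "x \<in> verts (edge_join T1 a b T2)"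
      "activation T1 a = 1" "activation T2 b = 1" "activation T3 y = 1"
      "activation (edge_join T1 a b T2) x = -1"
      "T = edge_join T3 y x (edge_join T1 a b T2)"
  using assms unfolding split_1_half_def Let_def by (elim exE conjE) (rule that)

lemma split_1_half_of_split_1_1_1:
  assumes "split_1_1_1 T"
  shows "split_1_half T"
  using assms
proof (rule split_1_1_1E)
  fix T1 T2 T3 x y z
  assume T: "tree T1" "tree T2" "tree T3"
    "verts T1 \<inter> verts T2 = {}" "verts T1 \<inter> verts T3 = {}" "verts T2 \<inter> verts T3 = {}"
    "always_solvable T1" "always_solvable T2" "always_solvable T3"
    "x \<in> verts T1" "y \<in> verts T2" "z \<in> verts T3"
    "activation T1 x = 1" "activation T2 y = 1" "activation T3 z = 1"
    "T = (verts T1 \<union> verts T2 \<union> verts T3, edges T1 \<union> edges T2 \<union> edges T3 \<union> {{x, y}, {y, z}})"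
  have "joinable T1 x y T2"
    using T by (simp add: joinable_def tree_simple_graph)
  then have "activation (edge_join T1 x y T2) y = -1"
    using half_activated_edge_join T(7,8,13,14) by (simp add: activation_eq_minus_1_iff)
  moreover have "T = edge_join T3 z y (edge_join T1 x y T2)"
    using T(16) by (simp add: edge_join_path3)
  ultimately show ?thesis
    using split_1_halfI[OF T(1-12) _ T(13-15)] T(11) by simp
qed

lemma always_solvable_of_split_1_half:
  assumes "split_1_half T"
  shows "always_solvable T"
  using assms
proof (rule split_1_halfE)
  fix T1 T2 T3 a b y x
  assume T: "tree T1" "tree T2" "tree T3"
    "verts T1 \<inter> verts T2 = {}" "verts T1 \<inter> verts T3 = {}" "verts T2 \<inter> verts T3 = {}"
    "always_solvable T1" "always_solvable T2" "always_solvable T3"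
    "a \<in> verts T1" "b \<in> verts T2" "y \<in> verts T3" "x \<in> verts (edge_join T1 a b T2)"
    "activation T1 a = 1" "activation T2 b = 1" "activation T3 y = 1"
    "activation (edge_join T1 a b T2) x = -1"
    "T = edge_join T3 y x (edge_join T1 a b T2)"
  let ?X = "edge_join T1 a b T2"
  have jX: "joinable T1 a b T2"
    using T by (simp add: joinable_def tree_simple_graph)
  have jT: "joinable T3 y x ?X"
    using T simple_graph_edge_join[OF jX] by (auto simp: joinable_def tree_simple_graph)
  obtain m where m: "m \<in> null_patterns ?X" "m x = 1"
    using T(17) by (auto simp: activation_eq_minus_1_iff half_activated_def)
  have "m \<noteq> 0"
    using m(2) by auto
  then have "null_patterns ?X \<subseteq> {0, m}"
    by (rule null_patterns_edge_join_subset[OF jX T(7,8) m(1)])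
  then show ?thesis
    using always_solvable_edge_join_unique_null_pattern[OF jT T(9,16) m] T(18) by simp
qed

lemma split_1_1_1_of_star:
  assumes jBA: "joinable B u y A" and jCR: "joinable C z y (edge_join B u y A)"
    and t: "tree B" "tree A" "tree C"
    and sT: "always_solvable (edge_join C z y (edge_join B u y A))"
    and s: "Nmul (edge_join C z y (edge_join B u y A)) s = ones (edge_join C z y (edge_join B u y A))"
      "s y = 1"
    and sB: "always_solvable B" and sC: "always_solvable C"
    and a: "activation B u = 1" "activation C z = 1"
  shows "split_1_1_1 (edge_join C z y (edge_join B u y A))"
proof -
  have sA: "always_solvable A"
    using always_solvable_of_star[OF jBA jCR sB sC a sT] .
  have "Nmul (edge_join B u y A) s = ones (edge_join B u y A)"
    using edge_join_solution_right[OF jCR s(1) edge_join_solution_eq_0[OF jCR sC s]] .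
  then have "Nmul A s = ones A"
    using edge_join_solution_right[OF jBA] edge_join_solution_eq_0[OF jBA sB] s(2) by blast
  then have "activation A y = 1"
    using activation_always_solvable[OF tree_finite[OF t(2)] sA] joinableD(2)[OF jBA] s(2) by simp
  moreover have "verts B \<inter> verts C = {}" "verts A \<inter> verts C = {}"
    using joinableD(6)[OF jCR] by auto
  ultimately show ?thesis
    using split_1_1_1I[OF t] sB sA sC a joinableD[OF jBA] joinableD[OF jCR] by simp
qed

lemma split_of_half_activated_branch:
  assumes t: "tree T" and sT: "always_solvable T" and s: "Nmul T s = ones T" "s y = 1"
    and jBA: "joinable B u y A" and TBA: "T = edge_join B u y A" and tB: "tree B" and tA: "tree A"
    and sB: "always_solvable B" and aB: "activation B u = 1" and hA: "half_activated A y"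
  shows "split_0_1 T \<or> split_1_1_1 T"
proof -
  obtain z where "adj A z y"
    using hA by (rule half_activated_has_neighbour)
  with tA obtain C A' where jCA': "joinable C z y A'" and ACA': "A = edge_join C z y A'"
    by (rule tree_split)
  let ?R = "edge_join B u y A'"
  have jBA': "joinable B u y A'" and jCR: "joinable C z y ?R"
    using joinable_edge_join_reassoc[OF jBA jCA' ACA'] by simp_all
  have TCR: "T = edge_join C z y ?R"
    using TBA ACA' by (simp add: edge_join_swap)
  have tC: "tree C" and tR: "tree ?R" and tA': "tree A'"
    using tree_edge_join_left[OF jCR] tree_edge_join_right[OF jCR] tree_edge_join_right[OF jCA']
      t tA TCR ACA' by simp_all
  have sTCR: "always_solvable (edge_join C z y ?R)"
    and sCR: "Nmul (edge_join C z y ?R) s = ones (edge_join C z y ?R)"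
    using sT s(1) TCR by simp_all
  have sC: "always_solvable C"
    using always_solvable_left_of_edge_join[OF jCR sTCR sCR s(2)] .
  from edge_join_solution_cases[OF jCR sTCR sCR s(2)]
  show ?thesis
  proof cases
    case 1
    then show ?thesis
      using split_0_1I[OF jCR tC tR sC] TCR by simp
  next
    case 2
    then show ?thesis
      using split_1_1_1_of_star[OF jBA' jCR tB tA' tC sTCR sCR s(2) sB sC aB] TCR by simp
  qed
qed

lemma split_of_always_solvable_tree:
  assumes t: "tree T" and c: "2 \<le> card (verts T)" and sT: "always_solvable T"
  shows "split_0_1 T \<or> split_1_1_1 T"
proof -
  have fin: "finite (verts T)"
    using t by (rule tree_finite)
  obtain s where s: "Nmul T s = ones T"
    using always_solvable_has_solution[OF fin sT ones_in_patterns] by blast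
  have "verts T \<noteq> {}"
    using c by auto
  then obtain y where y: "y \<in> verts T" "s y = 1"
    using ones_solution_nonzero[OF _ s] by blast
  obtain u where "adj T u y"
    using tree_has_neighbour[OF t c y(1)] .
  with t obtain B A where jBA: "joinable B u y A" and TBA: "T = edge_join B u y A"
    by (rule tree_split)
  have tB: "tree B" and tA: "tree A"
    using tree_edge_join_left[OF jBA] tree_edge_join_right[OF jBA] t TBA by simp_all
  have sTBA: "always_solvable (edge_join B u y A)"
    and sBA: "Nmul (edge_join B u y A) s = ones (edge_join B u y A)"
    using sT s TBA by simp_all
  have sB: "always_solvable B"
    using always_solvable_left_of_edge_join[OF jBA sTBA sBA y(2)] .
  from edge_join_solution_cases[OF jBA sTBA sBA y(2)]
  show ?thesis
  proof cases
    case 1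
    then show ?thesis
      using split_0_1I[OF jBA tB tA sB] TBA by simp
  next
    case 2
    then show ?thesis
      using split_of_half_activated_branch[OF t sT s y(2) jBA TBA tB tA sB] by simp
  qed
qed

theorem theorem4p7:
  fixes T :: "'a graph"
  assumes "tree T" and "card (verts T) \<ge> 2"
  defines "C2 \<equiv>
     (\<exists>T1 T2 u w. tree T1 \<and> tree T2 \<and> verts T1 \<inter> verts T2 = {} \<and>
        always_solvable T1 \<and> always_solvable T2 \<and> u \<in> verts T1 \<and> w \<in> verts T2 \<and>
        activation T1 u = 0 \<and> activation T2 w = 1 \<and> T = edge_join T1 u w T2)
   \<or> (\<exists>T1 T2 T3 x y z. tree T1 \<and> tree T2 \<and> tree T3 \<and>
        verts T1 \<inter> verts T2 = {} \<and> verts T1 \<inter> verts T3 = {} \<and> verts T2 \<inter> verts T3 = {} \<and>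
        always_solvable T1 \<and> always_solvable T2 \<and> always_solvable T3 \<and>
        x \<in> verts T1 \<and> y \<in> verts T2 \<and> z \<in> verts T3 \<and>
        activation T1 x = 1 \<and> activation T2 y = 1 \<and> activation T3 z = 1 \<and>
        T = (verts T1 \<union> verts T2 \<union> verts T3,
             edges T1 \<union> edges T2 \<union> edges T3 \<union> {{x, y}, {y, z}}))"
  and "C3 \<equiv>
     (\<exists>T1 T2 u w. tree T1 \<and> tree T2 \<and> verts T1 \<inter> verts T2 = {} \<and>
        always_solvable T1 \<and> always_solvable T2 \<and> u \<in> verts T1 \<and> w \<in> verts T2 \<and>
        activation T1 u = 0 \<and> activation T2 w = 1 \<and> T = edge_join T1 u w T2)
   \<or> (\<exists>T1 T2 T3 a b. tree T1 \<and> tree T2 \<and> tree T3 \<and>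
        verts T1 \<inter> verts T2 = {} \<and> verts T1 \<inter> verts T3 = {} \<and> verts T2 \<inter> verts T3 = {} \<and>
        always_solvable T1 \<and> always_solvable T2 \<and> always_solvable T3 \<and>
        a \<in> verts T1 \<and> b \<in> verts T2 \<and> activation T1 a = 1 \<and> activation T2 b = 1 \<and>
        (let X = edge_join T1 a b T2 in
          \<exists>y x. y \<in> verts T3 \<and> x \<in> verts X \<and> activation T3 y = 1 \<and> activation X x = -1 \<and>
            T = edge_join T3 y x X))"
  shows "(always_solvable T \<longleftrightarrow> C2) \<and> (always_solvable T \<longleftrightarrow> C3)"
proof -
  have C2: "C2 \<longleftrightarrow> split_0_1 T \<or> split_1_1_1 T"
    unfolding assms(3) split_0_1_def split_1_1_1_def ..
  have C3: "C3 \<longleftrightarrow> split_0_1 T \<or> split_1_half T"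
    unfolding assms(4) split_0_1_def split_1_half_def ..
  have "always_solvable T \<Longrightarrow> C2"
    using split_of_always_solvable_tree[OF assms(1,2)] C2 by blast
  moreover have "C2 \<Longrightarrow> C3"
    using split_1_half_of_split_1_1_1 C2 C3 by blast
  moreover have "C3 \<Longrightarrow> always_solvable T"
    using always_solvable_of_split_0_1 always_solvable_of_split_1_half C3 by blast
  ultimately show ?thesis
    by blast
qed

end
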